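(* Let $E$ be a real Hilbert space with $\dim(E)\ge2$, $h\in E$ a unit vector, $f:\mathbb{R}_{\ge0}\to\mathbb{R}_{\ge0}$, and $C_f=\{x\in E\mid f(\|x_\perp\|)\le x_h\}$. Then $(E,\preceq_f)$, where $x\preceq_f y\iff y-x\in C_f$, is an oriented (additive) group if and only if $f(0)=0$ and $f(d)>0$ for all $d>0$.
   Context: For $x\in E$ write $x=x_h h+x_\perp$ with $x_h=(x,h)$ and $x_\perp$ orthogonal to $h$. An orientation is a reflexive, antisymmetric binary relation. An oriented additive group is an abelian group with an orientation $\preceq$ such that $x\preceq y$ implies $x+z\preceq y+z$ for all $x,y,z$. *)

theory Defs
  imports "HOL-Analysis.Analysis"
begin

definition orientation :: "('a \<Rightarrow> 'a \<Rightarrow> bool) \<Rightarrow> bool" where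
  "orientation R \<longleftrightarrow> (\<forall>x. R x x) \<and> (\<forall>x y. R x y \<and> R y x \<longrightarrow> x = y)"

definition oriented_group :: "('a::ab_group_add \<Rightarrow> 'a \<Rightarrow> bool) \<Rightarrow> bool" where
  "oriented_group R \<longleftrightarrow> orientation R \<and> (\<forall>x y z. R x y \<longrightarrow> R (x + z) (y + z))"

definition comp_h :: "'a::real_inner \<Rightarrow> 'a \<Rightarrow> real" where
  "comp_h h x = inner x h"

definition comp_perp :: "'a::real_inner \<Rightarrow> 'a \<Rightarrow> 'a" where
  "comp_perp h x = x - comp_h h x *\<^sub>R h"

definition cone_f :: "(real \<Rightarrow> real) \<Rightarrow> 'a::real_inner \<Rightarrow> 'a set" where
  "cone_f f h = {x. f (norm (comp_perp h x)) \<le> comp_h h x}"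

definition preceq_f :: "(real \<Rightarrow> real) \<Rightarrow> 'a::real_inner \<Rightarrow> 'a \<Rightarrow> 'a \<Rightarrow> bool" where
  "preceq_f f h x y \<longleftrightarrow> y - x \<in> cone_f f h"

end

theory Submission
  imports Defs
begin

text \<open>A relation of the form \<open>y - x \<in> C\<close> is translation invariant, so it is an orientation
  exactly when \<open>C\<close> contains \<open>0\<close> and is pointed (\<open>C \<inter> -C \<subseteq> {0}\<close>). For \<open>C = C\<^sub>f\<close> and
  \<open>x \<in> C\<^sub>f \<inter> -C\<^sub>f\<close> we get \<open>f (\<parallel>x\<^sub>\<perp>\<parallel>) \<le> x\<^sub>h \<le> -f (\<parallel>x\<^sub>\<perp>\<parallel>)\<close>, which forces \<open>x = 0\<close>
  when \<open>f\<close> is positive off \<open>0\<close>; conversely, if \<open>f d \<le> 0\<close> for some \<open>d > 0\<close>, any vector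
  of norm \<open>d\<close> orthogonal to \<open>h\<close> (one exists since \<open>dim E \<ge> 2\<close>) lies in \<open>C\<^sub>f \<inter> -C\<^sub>f\<close>.\<close>

lemma oriented_group_difference_relation_iff:
  fixes C :: "'a::ab_group_add set"
  shows "oriented_group (\<lambda>x y. y - x \<in> C) \<longleftrightarrow> 0 \<in> C \<and> (\<forall>x. x \<in> C \<and> -x \<in> C \<longrightarrow> x = 0)"
proof -
  have "(\<forall>x y. y - x \<in> C \<and> x - y \<in> C \<longrightarrow> x = y) \<longleftrightarrow> (\<forall>x. x \<in> C \<and> -x \<in> C \<longrightarrow> x = 0)"
  proof (intro iffI allI impI)
    fix x
    assume "\<forall>x y. y - x \<in> C \<and> x - y \<in> C \<longrightarrow> x = y" and "x \<in> C \<and> -x \<in> C"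
    then show "x = 0"
      by (metis diff_0 diff_zero)
  next
    fix x y
    assume "\<forall>x. x \<in> C \<and> -x \<in> C \<longrightarrow> x = 0" and "y - x \<in> C \<and> x - y \<in> C"
    then show "x = y"
      by (metis minus_diff_eq eq_iff_diff_eq_0)
  qed
  then show ?thesis
    unfolding oriented_group_def orientation_def by simp
qed

lemma preceq_f_eq_difference_relation: "preceq_f f h = (\<lambda>x y. y - x \<in> cone_f f h)"
  by (simp add: preceq_f_def fun_eq_iff)

lemma zero_in_cone_f_iff: "0 \<in> cone_f f h \<longleftrightarrow> f 0 \<le> 0"
  by (simp add: cone_f_def comp_perp_def comp_h_def)

lemma comp_perp_minus: "comp_perp h (-x) = - comp_perp h x"
  by (simp add: comp_perp_def comp_h_def)

lemma comp_h_minus: "comp_h h (-x) = - comp_h h x"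
  by (simp add: comp_h_def)

lemma orthogonal_in_cone_f_iff:
  assumes "inner x h = 0"
  shows "x \<in> cone_f f h \<longleftrightarrow> f (norm x) \<le> 0"
  using assms by (simp add: cone_f_def comp_perp_def comp_h_def)

lemma exists_orthogonal_nonzero:
  fixes h :: "'a::real_inner"
  assumes "\<exists>B::'a set. independent B \<and> card B = 2"
  obtains y where "y \<noteq> 0" "inner y h = 0"
proof -
  obtain B :: "'a set" where B: "independent B" "card B = 2"
    using assms by blast
  have "\<not> B \<subseteq> span {h}"
    using independent_span_bound[of "{h}" B] B by auto
  then obtain y where y: "y \<notin> span {h}"
    by blast
  \<comment> \<open>when \<open>h = 0\<close> the coefficient is \<open>0\<close> by division by zero, and \<open>z = y\<close> still works\<close>
  define z where "z = y - (inner y h / inner h h) *\<^sub>R h"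
  have "inner z h = 0"
    by (cases "h = 0") (simp_all add: z_def inner_diff_left)
  moreover have "z \<noteq> 0"
  proof
    assume "z = 0"
    then have "y = (inner y h / inner h h) *\<^sub>R h"
      by (simp add: z_def)
    then have "y \<in> span {h}"
      by (metis span_base span_scale singletonI)
    then show False
      using y by contradiction
  qed
  ultimately show thesis
    using that by blast
qed

lemma exists_orthogonal_of_norm:
  fixes h :: "'a::real_inner"
  assumes "\<exists>B::'a set. independent B \<and> card B = 2" and "d \<ge> 0"
  obtains x where "inner x h = 0" "norm x = d"
proof -
  obtain y where "y \<noteq> 0" "inner y h = 0"
    using exists_orthogonal_nonzero assms(1) by blast
  then show thesis
    using that[of "(d / norm y) *\<^sub>R y"] assms(2) by simp
qed

lemma cone_f_pointed:
  assumes f0: "f 0 \<ge> 0" and fpos: "\<forall>d>0. f d > 0"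
    and x: "x \<in> cone_f f h" and minus_x: "-x \<in> cone_f f h"
  shows "x = 0"
proof -
  have le_h: "f (norm (comp_perp h x)) \<le> comp_h h x"
    and le_minus_h: "f (norm (comp_perp h x)) \<le> - comp_h h x"
    using x minus_x by (simp_all add: cone_f_def comp_perp_minus comp_h_minus)
  then have "\<not> f (norm (comp_perp h x)) > 0"
    by linarith
  then have "\<not> norm (comp_perp h x) > 0"
    using fpos by blast
  then have perp: "comp_perp h x = 0"
    by simp
  then have "comp_h h x = 0"
    using le_h le_minus_h f0 by simp
  then show "x = 0"
    using perp by (simp add: comp_perp_def)
qed

lemma cone_f_pointed_iff:
  fixes h :: "'a::real_inner"
  assumes dim2: "\<exists>B::'a set. independent B \<and> card B = 2" and f0: "f 0 \<ge> 0"
  shows "(\<forall>x. x \<in> cone_f f h \<and> -x \<in> cone_f f h \<longrightarrow> x = 0) \<longleftrightarrow> (\<forall>d>0. f d > 0)"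
proof
  assume pointed: "\<forall>x. x \<in> cone_f f h \<and> -x \<in> cone_f f h \<longrightarrow> x = 0"
  show "\<forall>d>0. f d > 0"
  proof (rule ccontr)
    assume "\<not> (\<forall>d>0. f d > 0)"
    then obtain d where d: "d > 0" "f d \<le> 0"
      by auto
    obtain x :: 'a where x: "inner x h = 0" "norm x = d"
      using exists_orthogonal_of_norm dim2 d(1) by (metis less_le)
    have "x \<in> cone_f f h" "-x \<in> cone_f f h"
      using x d(2) by (simp_all add: orthogonal_in_cone_f_iff)
    then show False
      using pointed x d(1) by auto
  qed
qed (use cone_f_pointed f0 in blast)

theorem mainTheorem13:
  fixes h :: "'a::{real_inner, complete_space}" and f :: "real \<Rightarrow> real"
  assumes dim2: "\<exists>B::'a set. independent B \<and> card B = 2"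
    and unit: "norm h = 1"
    and fnonneg: "\<forall>d\<ge>0. f d \<ge> 0"
  shows "oriented_group (preceq_f f h) \<longleftrightarrow> (f 0 = 0 \<and> (\<forall>d>0. f d > 0))"
proof -
  have f0: "f 0 \<ge> 0"
    using fnonneg by simp
  have "oriented_group (preceq_f f h) \<longleftrightarrow>
      0 \<in> cone_f f h \<and> (\<forall>x. x \<in> cone_f f h \<and> -x \<in> cone_f f h \<longrightarrow> x = 0)"
    by (simp add: preceq_f_eq_difference_relation oriented_group_difference_relation_iff)
  also have "\<dots> \<longleftrightarrow> f 0 = 0 \<and> (\<forall>d>0. f d > 0)"
    using zero_in_cone_f_iff[of f h] cone_f_pointed_iff[where f = f and h = h, OF dim2 f0] f0 by auto
  finally show ?thesis .
qed

end
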